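(* Let $K\ge 2$, let $\mathcal{X}$ be an input space, let $\mathcal{Y}$ be the set of probability vectors in $\mathbb{R}^K$, and for $k\in\{1,\dots,K\}$ let $\vec{k}\in\mathcal{Y}$ denote the one-hot vector of label $k$. Let $f:\mathcal{X}\to\mathcal{Y}$ be a classifier whose output probability vectors have strictly positive entries, and let $\ell(\boldsymbol{p},\boldsymbol{y}):=-\sum_{k=1}^K\boldsymbol{y}[k]\log\boldsymbol{p}[k]$ be the cross-entropy loss. Let $\boldsymbol{y}\in\mathcal{Y}$ be a one-hot label vector, let $\widetilde{\boldsymbol{x}}\in\mathcal{X}$ be arbitrary (a perturbed version of a training input), let $0<\epsilon\le 2$, and let $k^\ast$ be a least likely label under $f(\widetilde{\boldsymbol{x}})$, i.e. $k^\ast\in\arg\min_{k} f(\widetilde{\boldsymbol{x}})[k]$. Define $$\rho(\widetilde{\boldsymbol{x}},\boldsymbol{y}):=\Big(1-\frac{\epsilon}{2}\Big)\boldsymbol{y}+\frac{\epsilon}{2}\vec{k^\ast}\in\mathcal{Y}.$$ Then $$\rho(\widetilde{\boldsymbol{x}},\boldsymbol{y})\in\arg\max_{\widetilde{\boldsymbol{y}}\in\mathcal{Y},\ \|\widetilde{\boldsymbol{y}}-\boldsymbol{y}\|_1\le\epsilon}\ \ell\big(f(\widetilde{\boldsymbol{x}}),\widetilde{\boldsymbol{y}}\big),$$ i.e. $\rho(\widetilde{\boldsymbol{x}},\boldsymbol{y})$ maximizes the cross-entropy loss of the prediction $f(\widetilde{\boldsymbol{x}})$ over all label distributions within $\mathrm{L}_1$-distance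 $\epsilon$ of $\boldsymbol{y}$.
   Context: Labels are represented as probability vectors over $\{1,\dots,K\}$; $\|\cdot\|_1$ is the $\mathrm{L}_1$ norm on $\mathbb{R}^K$. The vector $\rho(\widetilde{\boldsymbol{x}},\boldsymbol{y})$ (the "adversarial label") is obtained by shifting probability mass $\epsilon/2$ from the ground-truth label to the least likely predicted label. *)

theory Defs
  imports "HOL-Analysis.Analysis"
begin

text \<open>Vectors in R^K are represented as functions nat => real indexed by {1..K},
  required to vanish outside {1..K}.\<close>

definition prob_vec :: "nat \<Rightarrow> (nat \<Rightarrow> real) \<Rightarrow> bool" where
  "prob_vec K p \<longleftrightarrow> (\<forall>k\<in>{1..K}. p k \<ge> 0) \<and> (\<forall>k. k \<notin> {1..K} \<longrightarrow> p k = 0)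
     \<and> (\<Sum>k\<in>{1..K}. p k) = 1"

definition one_hot :: "nat \<Rightarrow> nat \<Rightarrow> real" where
  "one_hot j = (\<lambda>k. if k = j then 1 else 0)"

definition l1_dist :: "nat \<Rightarrow> (nat \<Rightarrow> real) \<Rightarrow> (nat \<Rightarrow> real) \<Rightarrow> real" where
  "l1_dist K p q = (\<Sum>k\<in>{1..K}. \<bar>p k - q k\<bar>)"

definition cross_entropy :: "nat \<Rightarrow> (nat \<Rightarrow> real) \<Rightarrow> (nat \<Rightarrow> real) \<Rightarrow> real" where
  "cross_entropy K p y = - (\<Sum>k\<in>{1..K}. y k * ln (p k))"

end

theory Submission
  imports Defs
begin

text \<open>The loss is linear in the label, with coefficient \<open>- ln (p k)\<close> on label \<open>k\<close>, largest at
  the least likely label \<open>k\<^sup>*\<close>. For a probability vector \<open>q\<close> and a one-hot \<open>y\<close> at \<open>j\<close> one has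
  \<open>\<parallel>q - y\<parallel>\<^sub>1 = 2 (1 - q j)\<close>, so the constraint says exactly \<open>q j \<ge> 1 - \<epsilon>/2\<close>. The loss is then
  at most that of moving all mass off \<open>j\<close> to \<open>k\<^sup>*\<close>, and this bound is largest when as little
  mass as allowed stays at \<open>j\<close>, which is the adversarial label.\<close>

lemma sum_mult_one_hot:
  assumes "finite A" and "j \<in> A"
  shows "(\<Sum>k\<in>A. g k * one_hot j k) = g j"
  using assms unfolding one_hot_def by (simp add: if_distrib sum.delta' cong: if_cong)

lemma sum_one_hot:
  assumes "finite A" and "j \<in> A"
  shows "(\<Sum>k\<in>A. one_hot j k) = 1"
  using sum_mult_one_hot[OF assms, of "\<lambda>_. 1"] by simp

lemma prob_vec_one_hot: "j \<in> {1..K} \<Longrightarrow> prob_vec K (one_hot j)"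
  unfolding prob_vec_def by (auto simp: sum_one_hot) (auto simp: one_hot_def)

lemma prob_vec_convex_comb:
  assumes "prob_vec K p" and "prob_vec K q" and "0 \<le> t" and "t \<le> 1"
  shows "prob_vec K (\<lambda>k. (1 - t) * p k + t * q k)"
  using assms by (simp add: prob_vec_def sum.distrib flip: sum_distrib_left)

lemma l1_dist_one_hot:
  assumes "prob_vec K q" and "j \<in> {1..K}"
  shows "l1_dist K q (one_hot j) = 2 * (1 - q j)"
proof -
  let ?A = "{1..K} - {j}"
  have nonneg: "\<And>k. k \<in> {1..K} \<Longrightarrow> q k \<ge> 0" and total: "(\<Sum>k\<in>{1..K}. q k) = 1"
    using assms(1) by (auto simp: prob_vec_def)
  have rest: "(\<Sum>k\<in>?A. q k) = 1 - q j"
    using total assms(2) by (simp add: sum.remove)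
  then have "q j \<le> 1"
    using sum_nonneg[of ?A q] nonneg by force
  have "l1_dist K q (one_hot j) = \<bar>q j - 1\<bar> + (\<Sum>k\<in>?A. \<bar>q k - one_hot j k\<bar>)"
    unfolding l1_dist_def using assms(2) by (simp add: sum.remove one_hot_def)
  also have "(\<Sum>k\<in>?A. \<bar>q k - one_hot j k\<bar>) = (\<Sum>k\<in>?A. q k)"
    by (rule sum.cong) (auto simp: one_hot_def nonneg)
  finally show ?thesis
    using rest \<open>q j \<le> 1\<close> by simp
qed

lemma cross_entropy_convex_comb:
  "cross_entropy K p (\<lambda>k. a * y k + b * z k) = a * cross_entropy K p y + b * cross_entropy K p z"
  unfolding cross_entropy_def
  by (simp add: algebra_simps sum.distrib sum_distrib_left flip: sum_negf)

lemma cross_entropy_one_hot: "j \<in> {1..K} \<Longrightarrow> cross_entropy K p (one_hot j) = - ln (p j)"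
  unfolding cross_entropy_def
  using sum_mult_one_hot[of "{1..K}" j "\<lambda>k. ln (p k)"] by (simp add: mult.commute)

lemma sum_weighted_le_mass_at:
  fixes q c :: "'a \<Rightarrow> real"
  assumes "finite A" and "j \<in> A"
    and "\<And>k. k \<in> A \<Longrightarrow> q k \<ge> 0" and "(\<Sum>k\<in>A. q k) = 1"
    and "\<And>k. k \<in> A \<Longrightarrow> c k \<le> M"
  shows "(\<Sum>k\<in>A. q k * c k) \<le> q j * c j + (1 - q j) * M"
proof -
  have "(\<Sum>k\<in>A - {j}. q k * c k) \<le> (\<Sum>k\<in>A - {j}. q k * M)"
    using assms(3,5) by (intro sum_mono mult_left_mono) auto
  also have "\<dots> = (1 - q j) * M"
    using assms(1,2,4) by (simp add: sum.remove flip: sum_distrib_right)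
  finally show ?thesis
    using assms(1,2) by (simp add: sum.remove)
qed

lemma cross_entropy_le_least_likely:
  assumes "prob_vec K q" and "j \<in> {1..K}" and "m \<in> {1..K}"
    and "\<And>k. k \<in> {1..K} \<Longrightarrow> 0 < p k" and "\<And>k. k \<in> {1..K} \<Longrightarrow> p m \<le> p k"
  shows "cross_entropy K p q \<le> q j * - ln (p j) + (1 - q j) * - ln (p m)"
proof -
  have "(\<Sum>k\<in>{1..K}. q k * - ln (p k)) \<le> q j * - ln (p j) + (1 - q j) * - ln (p m)"
    using assms by (intro sum_weighted_le_mass_at) (auto simp: prob_vec_def)
  then show ?thesis
    by (simp add: cross_entropy_def flip: sum_negf)
qed

lemma convex_comb_le_of_weight_ge:
  fixes a b s t :: real
  assumes "t \<le> s" and "a \<le> b"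
  shows "s * a + (1 - s) * b \<le> t * a + (1 - t) * b"
proof -
  have "(s - t) * (a - b) \<le> 0"
    using assms by (simp add: mult_nonneg_nonpos)
  then show ?thesis
    by (simp add: algebra_simps)
qed

theorem theorem1:
  fixes K :: nat and f :: "'x \<Rightarrow> nat \<Rightarrow> real" and x :: 'x
    and y :: "nat \<Rightarrow> real" and \<epsilon> :: real and kstar :: nat
  assumes "K \<ge> 2"
    and "\<And>z. prob_vec K (f z)"
    and "\<And>z k. k \<in> {1..K} \<Longrightarrow> f z k > 0"
    and "j \<in> {1..K}" and "y = one_hot j"
    and "0 < \<epsilon>" and "\<epsilon> \<le> 2"
    and "kstar \<in> {1..K}" and "\<And>k. k \<in> {1..K} \<Longrightarrow> f x kstar \<le> f x k"
  shows "prob_vec K (\<lambda>k. (1 - \<epsilon>/2) * y k + (\<epsilon>/2) * one_hot kstar k)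
    \<and> l1_dist K (\<lambda>k. (1 - \<epsilon>/2) * y k + (\<epsilon>/2) * one_hot kstar k) y \<le> \<epsilon>
    \<and> (\<forall>y'. prob_vec K y' \<and> l1_dist K y' y \<le> \<epsilon> \<longrightarrow>
        cross_entropy K (f x) y' \<le>
        cross_entropy K (f x) (\<lambda>k. (1 - \<epsilon>/2) * y k + (\<epsilon>/2) * one_hot kstar k))"
proof -
  define \<rho> where "\<rho> = (\<lambda>k. (1 - \<epsilon>/2) * y k + (\<epsilon>/2) * one_hot kstar k)"
  define c where "c = (\<lambda>k. - ln (f x k))"
  have "c j \<le> c kstar"
    using assms(3,4,8,9) by (simp add: c_def)
  have \<rho>_prob: "prob_vec K \<rho>"
    unfolding \<rho>_def assms(5) using assms(4,6,7,8)
    by (intro prob_vec_convex_comb prob_vec_one_hot) auto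
  have l1_iff: "l1_dist K q y \<le> \<epsilon> \<longleftrightarrow> 1 - \<epsilon>/2 \<le> q j" if "prob_vec K q" for q
    using l1_dist_one_hot[OF that assms(4)] assms(5) by auto
  have "1 - \<epsilon>/2 \<le> \<rho> j"
    using assms(5,6) by (simp add: \<rho>_def one_hot_def)
  have \<rho>_loss: "cross_entropy K (f x) \<rho> = (1 - \<epsilon>/2) * c j + (1 - (1 - \<epsilon>/2)) * c kstar"
    unfolding \<rho>_def assms(5) cross_entropy_convex_comb
    using assms(4,8) by (simp add: cross_entropy_one_hot c_def)
  have "cross_entropy K (f x) q \<le> cross_entropy K (f x) \<rho>"
    if "prob_vec K q" and "1 - \<epsilon>/2 \<le> q j" for q
  proof -
    have "cross_entropy K (f x) q \<le> q j * c j + (1 - q j) * c kstar"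
      unfolding c_def using that(1) assms(4,8)
      by (rule cross_entropy_le_least_likely) (use assms(3,9) in auto)
    also have "\<dots> \<le> (1 - \<epsilon>/2) * c j + (1 - (1 - \<epsilon>/2)) * c kstar"
      using that(2) \<open>c j \<le> c kstar\<close> by (rule convex_comb_le_of_weight_ge)
    finally show ?thesis
      unfolding \<rho>_loss .
  qed
  then show ?thesis
    using \<rho>_prob l1_iff \<open>1 - \<epsilon>/2 \<le> \<rho> j\<close> unfolding \<rho>_def by blast
qed

end
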